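(* Let $n$ be a positive integer and $\lambda$ an infinite cardinal. For every $d$-feebly compact shift-continuous $T_1$-topology $\tau$ on the semilattice $\exp_n\lambda$, a point $x$ is isolated in $(\exp_n\lambda,\tau)$ if and only if $x\in\exp_n\lambda\setminus\exp_{n-1}\lambda$.
   Context: For a positive integer $n$ and a cardinal $\lambda$, $\exp_n\lambda=\{A\subseteq\lambda\colon |A|\leqslant n\}$, regarded as a semilattice under the operation $\cap$ (so $\exp_0\lambda=\{\varnothing\}$). A topology $\tau$ on a semilattice $S$ is shift-continuous if the semilattice operation is separately continuous, i.e. $(S,\tau)$ is a semitopological semilattice. A topological space is $d$-feebly compact if every discrete family of open subsets of it is finite. *)

theory Defs
  imports "HOL-Analysis.Analysis"
begin

text \<open>exp_n(lambda): subsets of the ground set (the universe of type 'a) of size at most n.\<close>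
definition expn :: "nat \<Rightarrow> 'a set set" where
  "expn n = {A. finite A \<and> card A \<le> n}"

definition shift_continuous :: "'a set topology \<Rightarrow> bool" where
  "shift_continuous T \<longleftrightarrow>
     (\<forall>a \<in> topspace T. continuous_map T T (\<lambda>x. x \<inter> a))"

definition discrete_family :: "'b topology \<Rightarrow> 'b set set \<Rightarrow> bool" where
  "discrete_family X \<U> \<longleftrightarrow>
     (\<forall>x \<in> topspace X. \<exists>V. openin X V \<and> x \<in> V \<and>
        (\<forall>U1 \<in> \<U>. \<forall>U2 \<in> \<U>. U1 \<inter> V \<noteq> {} \<and> U2 \<inter> V \<noteq> {} \<longrightarrow> U1 = U2))"

definition d_feebly_compact :: "'b topology \<Rightarrow> bool" where
  "d_feebly_compact X \<longleftrightarrow>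
     (\<forall>\<U>. (\<forall>U \<in> \<U>. openin X U) \<and> discrete_family X \<U> \<longrightarrow> finite \<U>)"

end

theory Submission
  imports Defs
begin

text \<open>In a shift-continuous T1 semilattice of sets the principal filter of y is the preimage of the
closed point y under the translation by y, hence closed; when y is finite it is also the preimage of
the complement of the finitely many proper subsets of y, hence open. For |y| = n the principal filter
of y in exp_n is just {y}, so y is isolated. Conversely, if |x| < n, the infinitely many n-element sets
x \<union> B_i with pairwise disjoint nonempty B_i are isolated points forming a discrete family:
a point z \<not>\<subseteq> x has the open neighbourhood up(z), which contains at most one of them;
a point z \<subset> x lies in the open complement of up(x); and x itself would be isolated too.
This contradicts d-feeble compactness.\<close>

lemma shift_continuous_translation:
  assumes "shift_continuous \<tau>" "y \<in> topspace \<tau>"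
  shows "continuous_map \<tau> \<tau> (\<lambda>w. w \<inter> y)"
  using assms by (simp add: shift_continuous_def)

lemma closedin_principal_filter:
  assumes sc: "shift_continuous \<tau>" and t1: "t1_space \<tau>" and y: "y \<in> topspace \<tau>"
  shows "closedin \<tau> {w \<in> topspace \<tau>. y \<subseteq> w}"
proof -
  have "closedin \<tau> {w \<in> topspace \<tau>. w \<inter> y \<in> {y}}"
    using closedin_continuous_map_preimage[OF shift_continuous_translation[OF sc y]]
      closedin_t1_singleton[OF t1] y by blast
  moreover have "{w \<in> topspace \<tau>. w \<inter> y \<in> {y}} = {w \<in> topspace \<tau>. y \<subseteq> w}" by auto
  ultimately show ?thesis by simp
qed

lemma openin_principal_filter:
  assumes sc: "shift_continuous \<tau>" and t1: "t1_space \<tau>"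
    and y: "y \<in> topspace \<tau>" and fin: "finite y"
  shows "openin \<tau> {w \<in> topspace \<tau>. y \<subseteq> w}"
proof -
  define P where "P = (Pow y - {y}) \<inter> topspace \<tau>"
  have "closedin \<tau> (\<Union>p\<in>P. {p})"
    using fin t1 unfolding P_def by (intro closedin_Union) (auto intro: closedin_t1_singleton)
  then have "openin \<tau> (topspace \<tau> - P)" by auto
  then have "openin \<tau> {w \<in> topspace \<tau>. w \<inter> y \<in> topspace \<tau> - P}"
    by (rule openin_continuous_map_preimage[OF shift_continuous_translation[OF sc y]])
  moreover have "{w \<in> topspace \<tau>. w \<inter> y \<in> topspace \<tau> - P} = {w \<in> topspace \<tau>. y \<subseteq> w}"
    using continuous_map_image_subset_topspace[OF shift_continuous_translation[OF sc y]]
    unfolding P_def by blast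
  ultimately show ?thesis by simp
qed

lemma isolated_if_card_eq:
  assumes sc: "shift_continuous \<tau>" and t1: "t1_space \<tau>" and ts: "topspace \<tau> = expn n"
    and "finite y" "card y = n"
  shows "openin \<tau> {y}"
proof -
  have y: "y \<in> expn n" using assms by (simp add: expn_def)
  have "w = y" if "w \<in> expn n" "y \<subseteq> w" for w
    using that assms by (metis card_subset_eq expn_def mem_Collect_eq card_mono antisym)
  then have "{w \<in> topspace \<tau>. y \<subseteq> w} = {y}" using y ts by auto
  then show ?thesis using openin_principal_filter[OF sc t1 _ \<open>finite y\<close>] y ts by simp
qed

lemma exists_disjoint_completions:
  fixes x :: "'a set"
  assumes "infinite (UNIV :: 'a set)" "finite x" "card x < n"
  obtains B :: "nat \<Rightarrow> 'a set"
  where "disjoint_family B" "\<And>i. B i \<noteq> {}" "\<And>i. B i \<inter> x = {}" "\<And>i. card (x \<union> B i) = n"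
proof -
  have "infinite (UNIV - x)" using assms by (simp add: Diff_infinite_finite)
  then obtain g :: "nat \<Rightarrow> 'a" where g: "inj g" "range g \<subseteq> UNIV - x"
    using infinite_countable_subset by blast
  define h where "h = g \<circ> prod_encode"
  have h: "inj h" "\<And>p. h p \<notin> x" using g inj_prod_encode by (auto simp: h_def inj_compose)
  define B where "B i = (\<lambda>k. h (i, k)) ` {..<n - card x}" for i
  have "disjoint_family B" using h(1) by (auto simp: disjoint_family_on_def B_def dest: injD)
  moreover have "B i \<noteq> {}" for i using assms by (auto simp: B_def lessThan_empty_iff)
  moreover have Bx: "B i \<inter> x = {}" for i using h(2) by (auto simp: B_def)
  moreover have "card (x \<union> B i) = n" for i
  proof -
    have "card (B i) = n - card x"
      unfolding B_def by (subst card_image) (auto intro: inj_onI dest: injD[OF h(1)])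
    then show ?thesis using Bx assms by (simp add: card_Un_disjoint Int_commute B_def)
  qed
  ultimately show thesis using that by blast
qed

lemma discrete_family_completions:
  assumes sc: "shift_continuous \<tau>" and t1: "t1_space \<tau>"
    and fin: "\<And>z. z \<in> topspace \<tau> \<Longrightarrow> finite z"
    and x: "x \<in> topspace \<tau>" "openin \<tau> {x}"
    and B: "disjoint_family B" "\<And>i. B i \<noteq> {}" "\<And>i. B i \<inter> x = {}"
  shows "discrete_family \<tau> (range (\<lambda>i. {x \<union> B i}))"
  unfolding discrete_family_def
proof
  fix z assume z: "z \<in> topspace \<tau>"
  consider "z = x" | "z \<subset> x" | a where "a \<in> z" "a \<notin> x" by blast
  then show "\<exists>V. openin \<tau> V \<and> z \<in> V \<and> (\<forall>U1 \<in> range (\<lambda>i. {x \<union> B i}).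
    \<forall>U2 \<in> range (\<lambda>i. {x \<union> B i}). U1 \<inter> V \<noteq> {} \<and> U2 \<inter> V \<noteq> {} \<longrightarrow> U1 = U2)"
  proof cases
    case 1
    have "x \<union> B i \<noteq> x" for i using B by blast
    then show ?thesis using x 1 by (intro exI[of _ "{x}"]) auto
  next
    case 2
    let ?V = "topspace \<tau> - {w \<in> topspace \<tau>. x \<subseteq> w}"
    have "openin \<tau> ?V" using closedin_principal_filter[OF sc t1 x(1)] by blast
    then show ?thesis using z 2 by (intro exI[of _ ?V]) auto
  next
    case 3
    let ?V = "{w \<in> topspace \<tau>. z \<subseteq> w}"
    have "i = j" if "a \<in> B i" "a \<in> B j" for i j
      using B(1) that by (auto simp: disjoint_family_on_def)
    then have "\<forall>U1 \<in> range (\<lambda>i. {x \<union> B i}). \<forall>U2 \<in> range (\<lambda>i. {x \<union> B i}).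
        U1 \<inter> ?V \<noteq> {} \<and> U2 \<inter> ?V \<noteq> {} \<longrightarrow> U1 = U2"
      using 3 by blast
    then show ?thesis using openin_principal_filter[OF sc t1 z fin[OF z]] z by blast
  qed
qed

lemma inj_completions:
  assumes "disjoint_family B" "\<And>i. B i \<noteq> {}" "\<And>i. B i \<inter> x = {}"
  shows "inj (\<lambda>i. {x \<union> B i})"
proof (rule injI)
  fix i j assume "{x \<union> B i} = {x \<union> B j}"
  moreover obtain a where "a \<in> B i" using assms(2) by blast
  ultimately have "a \<in> B j" using assms(3) by blast
  then show "i = j" using \<open>a \<in> B i\<close> assms(1) by (auto simp: disjoint_family_on_def)
qed

theorem corollary6:
  fixes \<tau> :: "'a set topology" and n :: nat
  assumes "infinite (UNIV :: 'a set)"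
    and "n \<ge> 1"
    and "topspace \<tau> = expn n"
    and "shift_continuous \<tau>"
    and "t1_space \<tau>"
    and "d_feebly_compact \<tau>"
    and "x \<in> expn n"
  shows "openin \<tau> {x} \<longleftrightarrow> x \<in> expn n - expn (n - 1)"
proof
  assume "x \<in> expn n - expn (n - 1)"
  then have "finite x" "card x = n" using assms(2) by (auto simp: expn_def)
  then show "openin \<tau> {x}" using isolated_if_card_eq[OF assms(4,5,3)] by blast
next
  assume isolated: "openin \<tau> {x}"
  have fin: "finite z" if "z \<in> topspace \<tau>" for z using that assms(3) by (simp add: expn_def)
  show "x \<in> expn n - expn (n - 1)"
  proof (rule ccontr)
    assume "x \<notin> expn n - expn (n - 1)"
    then have "card x < n" "finite x" using assms(2,7) by (auto simp: expn_def)
    then obtain B :: "nat \<Rightarrow> 'a set"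
      where B: "disjoint_family B" "\<And>i. B i \<noteq> {}" "\<And>i. B i \<inter> x = {}"
        and card: "\<And>i. card (x \<union> B i) = n"
      using exists_disjoint_completions[OF assms(1)] by metis
    have "finite (x \<union> B i)" for i using card[of i] assms(2) by (metis card.infinite not_one_le_zero)
    then have "\<forall>U \<in> range (\<lambda>i. {x \<union> B i}). openin \<tau> U"
      using isolated_if_card_eq[OF assms(4,5,3)] card by blast
    moreover have "discrete_family \<tau> (range (\<lambda>i. {x \<union> B i}))"
      using discrete_family_completions[OF assms(4,5) fin _ isolated B] assms(3,7) by simp
    ultimately have "finite (range (\<lambda>i. {x \<union> B i}))"
      using assms(6) by (simp add: d_feebly_compact_def)
    then show False using inj_completions[OF B] by (simp add: finite_image_iff)
  qed
qed

end
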